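(* Let $N\ge2$ and $k\ge2$ be fixed integers and $\epsilon>0$. Let the class distribution be $\pi_i=\frac{\epsilon}{(N-1)(1+\epsilon)}$ for $1\le i\le N-1$ and $\pi_N=\frac{1}{1+\epsilon}$. In one round of the large-batch model of the $k$IC batch labeling algorithm, the resulting class distribution $\boldsymbol{\pi}'$ and the single-round average query rate $R_2^{kIC}=1/(k\,P(s\in\mathcal{L}))$ satisfy, as $\epsilon\to0$, $$\pi'_N=1-k\epsilon+o(\epsilon),\qquad \pi'_i=\frac{k\epsilon}{N-1}+o(\epsilon)\ (1\le i\le N-1),\qquad R_2^{kIC}=\frac{1}{k-1}+\frac{k}{(k-1)^2}\epsilon+o(\epsilon).$$
   Context: Large-batch model of one round: each $k$IC query consists of $k$ samples with i.i.d. classes drawn from $\boldsymbol{\pi}$; an error-free oracle reveals which samples share a class; one representative of each class present is returned to the next batch and the other samples are settled. $P(s\in\mathcal{L})$ is the expected number of settled samples per query divided by $k$, i.e. $1-\frac1k\sum_{j=1}^N(1-(1-\pi_j)^k)$, and $\pi'_i=\frac{1-(1-\pi_i)^k}{N-\sum_{j}(1-\pi_j)^k}$ is the class distribution of the returned batch. *)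

theory Defs
  imports "HOL-Analysis.Analysis" "HOL-Library.Landau_Symbols"
begin

definition settled_prob :: "nat \<Rightarrow> nat \<Rightarrow> (nat \<Rightarrow> real) \<Rightarrow> real" where
  "settled_prob N k \<pi> = 1 - (1 / real k) * (\<Sum>j=1..N. 1 - (1 - \<pi> j) ^ k)"

definition next_dist :: "nat \<Rightarrow> nat \<Rightarrow> (nat \<Rightarrow> real) \<Rightarrow> nat \<Rightarrow> real" where
  "next_dist N k \<pi> i = (1 - (1 - \<pi> i) ^ k) / (real N - (\<Sum>j=1..N. (1 - \<pi> j) ^ k))"

definition query_rate_R2 :: "nat \<Rightarrow> nat \<Rightarrow> (nat \<Rightarrow> real) \<Rightarrow> real" where
  "query_rate_R2 N k \<pi> = 1 / (real k * settled_prob N k \<pi>)"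

definition pi_eps :: "nat \<Rightarrow> real \<Rightarrow> nat \<Rightarrow> real" where
  "pi_eps N \<epsilon> i = (if i = N then 1 / (1 + \<epsilon>) else \<epsilon> / ((real N - 1) * (1 + \<epsilon>)))"

end

theory Submission
  imports Defs
begin

text \<open>At \<open>\<epsilon> = 0\<close> all mass sits on class \<open>N\<close>, and both \<open>\<pi>'\<close> and \<open>R\<^sub>2\<close> are smooth quotients
  built from the miss probabilities \<open>(1 - \<pi>\<^sub>i)\<^sup>k\<close> and the expected number
  \<open>D = N - \<Sum>\<^sub>j (1 - \<pi>\<^sub>j)\<^sup>k\<close> of distinct classes per query, so the claims are first-order Taylor
  expansions at \<open>\<epsilon> = 0\<close>. A minority class is missed with probability \<open>1 - k\<epsilon>/(N-1) + O(\<epsilon>\<^sup>2)\<close>,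
  class \<open>N\<close> only with probability \<open>O(\<epsilon>\<^sup>k)\<close>, which is \<open>o(\<epsilon>)\<close> because \<open>k \<ge> 2\<close>. Hence
  \<open>D = 1 + k\<epsilon> + o(\<epsilon>)\<close>, and the quotient rule gives the three expansions.\<close>

lemma has_real_derivative_imp_smallo:
  fixes g :: "real \<Rightarrow> real"
  assumes "(g has_real_derivative d) (at x)"
  shows "(\<lambda>h. g (x + h) - (g x + d * h)) \<in> o[at 0](\<lambda>h. h)"
proof (rule smalloI_tendsto)
  have "((\<lambda>h. (g (x + h) - g x) / h - d) \<longlongrightarrow> 0) (at 0)"
    using tendsto_diff[OF DERIV_D[OF assms] tendsto_const[of d]] by simp
  then show "((\<lambda>h. (g (x + h) - (g x + d * h)) / h) \<longlongrightarrow> 0) (at 0)"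
  proof (rule Lim_transform_eventually)
    show "\<forall>\<^sub>F h in at 0. (g (x + h) - g x) / h - d = (g (x + h) - (g x + d * h)) / h"
      unfolding eventually_at_filter by (intro always_eventually) (auto simp: field_simps)
  qed
  show "\<forall>\<^sub>F h in at 0. (h::real) \<noteq> 0"
    by (simp add: eventually_at_filter)
qed

corollary has_real_derivative_imp_smallo_at_right:
  fixes f :: "real \<Rightarrow> real"
  assumes "(f has_real_derivative d) (at 0)"
  shows "(\<lambda>\<epsilon>. f \<epsilon> - (f 0 + d * \<epsilon>)) \<in> o[at_right 0](\<lambda>\<epsilon>. \<epsilon>)"
  using landau_o.small.filter_mono[OF at_within_le_at has_real_derivative_imp_smallo[OF assms]]
  by simp

lemma sum_atLeastAtMost_if_last:
  fixes a b :: "'a::comm_ring_1"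
  assumes "N \<ge> 1"
  shows "(\<Sum>j=1..N. if j = N then a else b) = a + of_nat (N - 1) * b"
proof -
  have "{1..N} = insert N {1..<N}" using assms by auto
  then show ?thesis by simp
qed

definition expected_distinct :: "nat \<Rightarrow> nat \<Rightarrow> (nat \<Rightarrow> real) \<Rightarrow> real" where
  "expected_distinct N k \<pi> = real N - (\<Sum>j=1..N. (1 - \<pi> j) ^ k)"

lemma next_dist_eq: "next_dist N k \<pi> i = (1 - (1 - \<pi> i) ^ k) / expected_distinct N k \<pi>"
  by (simp add: next_dist_def expected_distinct_def)

lemma query_rate_R2_eq:
  assumes "k > 0"
  shows "query_rate_R2 N k \<pi> = 1 / (real k - expected_distinct N k \<pi>)"
proof -
  have "(\<Sum>j=1..N. 1 - (1 - \<pi> j) ^ k) = expected_distinct N k \<pi>"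
    by (simp add: sum_subtractf expected_distinct_def)
  then show ?thesis
    using assms by (simp add: query_rate_R2_def settled_prob_def right_diff_distrib)
qed

lemma pi_eps_0: "pi_eps N 0 i = (if i = N then 1 else 0)"
  by (simp add: pi_eps_def)

lemma pi_eps_has_real_derivative:
  assumes "N \<ge> 2"
  shows "((\<lambda>\<epsilon>. pi_eps N \<epsilon> i) has_real_derivative (if i = N then -1 else 1 / (real N - 1))) (at 0)"
proof -
  have "real N - 1 \<noteq> 0" using assms by simp
  then show ?thesis
    unfolding pi_eps_def
    by (cases "i = N") (auto intro!: derivative_eq_intros simp: power2_eq_square)
qed

lemma miss_prob_pi_eps_has_real_derivative:
  assumes "N \<ge> 2" and "k \<ge> 2"
  shows "((\<lambda>\<epsilon>. (1 - pi_eps N \<epsilon> i) ^ k) has_real_derivative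
           (if i = N then 0 else - real k / (real N - 1))) (at 0)"
  using assms
  by (auto intro!: derivative_eq_intros pi_eps_has_real_derivative simp: pi_eps_0)

lemma expected_distinct_pi_eps:
  assumes "N \<ge> 2" and "k \<ge> 2"
  shows "expected_distinct N k (pi_eps N 0) = 1"
    and "((\<lambda>\<epsilon>. expected_distinct N k (pi_eps N \<epsilon>)) has_real_derivative real k) (at 0)"
proof -
  have "(1 - pi_eps N 0 j) ^ k = (if j = N then 0 else 1)" for j
    using assms by (simp add: pi_eps_0)
  then have "(\<Sum>j=1..N. (1 - pi_eps N 0 j) ^ k) = real N - 1"
    using assms sum_atLeastAtMost_if_last[of N "0::real" 1] by (simp add: of_nat_diff)
  then show "expected_distinct N k (pi_eps N 0) = 1"
    by (simp add: expected_distinct_def)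
  have "(\<Sum>j=1..N. if j = N then 0 else - real k / (real N - 1)) = - real k"
    using assms sum_atLeastAtMost_if_last[of N 0 "- real k / (real N - 1)"]
    by (simp add: of_nat_diff)
  moreover have "((\<lambda>\<epsilon>. \<Sum>j=1..N. (1 - pi_eps N \<epsilon> j) ^ k) has_real_derivative
      (\<Sum>j=1..N. if j = N then 0 else - real k / (real N - 1))) (at 0)"
    by (rule DERIV_sum) (rule miss_prob_pi_eps_has_real_derivative[OF assms])
  ultimately show "((\<lambda>\<epsilon>. expected_distinct N k (pi_eps N \<epsilon>)) has_real_derivative real k) (at 0)"
    unfolding expected_distinct_def using DERIV_diff[OF DERIV_const[of "real N"]] by fastforce
qed

lemma next_dist_pi_eps:
  assumes "N \<ge> 2" and "k \<ge> 2"
  shows "next_dist N k (pi_eps N 0) i = (if i = N then 1 else 0)"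
    and "((\<lambda>\<epsilon>. next_dist N k (pi_eps N \<epsilon>) i) has_real_derivative
           (if i = N then - real k else real k / (real N - 1))) (at 0)"
proof -
  note distinct = expected_distinct_pi_eps[OF assms]
  show "next_dist N k (pi_eps N 0) i = (if i = N then 1 else 0)"
    using assms distinct by (simp add: next_dist_eq pi_eps_0)
  show "((\<lambda>\<epsilon>. next_dist N k (pi_eps N \<epsilon>) i) has_real_derivative
      (if i = N then - real k else real k / (real N - 1))) (at 0)"
    unfolding next_dist_eq
    using DERIV_quotient[OF DERIV_diff[OF DERIV_const[of 1]
          miss_prob_pi_eps_has_real_derivative[OF assms, of i]] distinct(2)] assms distinct(1)
    by (cases "i = N") (simp_all add: pi_eps_0 power_0_left)
qed

lemma query_rate_R2_pi_eps:
  assumes "N \<ge> 2" and "k \<ge> 2"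
  shows "query_rate_R2 N k (pi_eps N 0) = 1 / (real k - 1)"
    and "((\<lambda>\<epsilon>. query_rate_R2 N k (pi_eps N \<epsilon>)) has_real_derivative
           real k / (real k - 1)^2) (at 0)"
proof -
  note distinct = expected_distinct_pi_eps[OF assms]
  have rate_eq: "query_rate_R2 N k \<pi> = 1 / (real k - expected_distinct N k \<pi>)" for \<pi>
    using assms by (simp add: query_rate_R2_eq)
  show "query_rate_R2 N k (pi_eps N 0) = 1 / (real k - 1)"
    by (simp add: rate_eq distinct)
  show "((\<lambda>\<epsilon>. query_rate_R2 N k (pi_eps N \<epsilon>)) has_real_derivative
      real k / (real k - 1)^2) (at 0)"
    unfolding rate_eq using assms distinct
    by (auto intro!: derivative_eq_intros simp: power2_eq_square)
qed

theorem corollary4: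
  fixes N k :: nat
  assumes "N \<ge> 2" and "k \<ge> 2"
  shows "((\<lambda>\<epsilon>. next_dist N k (pi_eps N \<epsilon>) N - (1 - real k * \<epsilon>)) \<in> o[at_right 0](\<lambda>\<epsilon>. \<epsilon>))
    \<and> (\<forall>i\<in>{1..N-1}. (\<lambda>\<epsilon>. next_dist N k (pi_eps N \<epsilon>) i - real k * \<epsilon> / (real N - 1))
            \<in> o[at_right 0](\<lambda>\<epsilon>. \<epsilon>))
    \<and> ((\<lambda>\<epsilon>. query_rate_R2 N k (pi_eps N \<epsilon>) - (1 / (real k - 1) + real k / (real k - 1)^2 * \<epsilon>))
            \<in> o[at_right 0](\<lambda>\<epsilon>. \<epsilon>))"
proof (intro conjI ballI)
  note next_dist = next_dist_pi_eps[OF assms]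
  show "(\<lambda>\<epsilon>. next_dist N k (pi_eps N \<epsilon>) N - (1 - real k * \<epsilon>)) \<in> o[at_right 0](\<lambda>\<epsilon>. \<epsilon>)"
    using has_real_derivative_imp_smallo_at_right[OF next_dist(2)[of N]]
    by (simp add: next_dist(1))
  show "(\<lambda>\<epsilon>. next_dist N k (pi_eps N \<epsilon>) i - real k * \<epsilon> / (real N - 1)) \<in> o[at_right 0](\<lambda>\<epsilon>. \<epsilon>)"
    if "i \<in> {1..N-1}" for i
  proof -
    have "i \<noteq> N" using that assms by auto
    then show ?thesis
      using has_real_derivative_imp_smallo_at_right[OF next_dist(2)[of i]]
      by (simp add: next_dist(1) mult.commute)
  qed
  show "(\<lambda>\<epsilon>. query_rate_R2 N k (pi_eps N \<epsilon>) - (1 / (real k - 1) + real k / (real k - 1)^2 * \<epsilon>))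
      \<in> o[at_right 0](\<lambda>\<epsilon>. \<epsilon>)"
    using has_real_derivative_imp_smallo_at_right[OF query_rate_R2_pi_eps(2)[OF assms]]
    by (simp add: query_rate_R2_pi_eps(1)[OF assms])
qed

end
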